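(* Let $\mathcal{A}$ be a unital $C^*$-algebra with unit $I$, let $\eta:\mathcal{A}_+\to\mathcal{A}_+$ be a holomorphic map which is bounded on bounded subsets of $\mathcal{A}_+$, and let $V\in\mathcal{A}_+$. Let $b>\|(\operatorname{Re} V)^{-1}\|$ and $$R_b:=\{W\in\mathcal{A}_+\mid \|W\|<b\}.$$ Then the map $\mathcal{F}_V(W):=[V+\eta(W)]^{-1}$ is a well-defined bounded holomorphic map $R_b\to R_b$ which maps $R_b$ strictly into itself, i.e. there is $\epsilon>0$ such that the open norm ball of radius $\epsilon$ around $\mathcal{F}_V(W)$ is contained in $R_b$ for every $W\in R_b$. Moreover, for all $W\in R_b$, $$\operatorname{Re}\mathcal{F}_V(W)\geq \frac{1}{m_b^2\,\|(\operatorname{Re} V)^{-1}\|}\,I,\qquad m_b:=\|V\|+\sup\{\|\eta(W')\|\mid W'\in\mathcal{A}_+,\ \|W'\|\leq b\}.$$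
   Context: $\mathcal{A}_+:=\{W\in\mathcal{A}\mid \operatorname{Re} W\geq \varepsilon I \text{ for some } \varepsilon>0\}$, where $\operatorname{Re} W:=\frac12(W+W^* )$. "Bounded on bounded subsets" means $\sup\{\|\eta(W)\|\mid W\in\mathcal{A}_+,\ \|W\|\leq r\}<\infty$ for every $r>0$. For selfadjoint $A$, $A\geq B$ means the spectrum of $A-B$ lies in $[0,\infty)$. *)

theory Defs
  imports "HOL-Analysis.Analysis"
begin

class cstar_algebra = real_normed_algebra_1 + banach +
  fixes scaleC :: "complex \<Rightarrow> 'a \<Rightarrow> 'a"
    and adj :: "'a \<Rightarrow> 'a"
  assumes scaleC_add_left: "scaleC (a + b) x = scaleC a x + scaleC b x"
    and scaleC_add_right: "scaleC a (x + y) = scaleC a x + scaleC a y"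
    and scaleC_scaleC: "scaleC a (scaleC b x) = scaleC (a * b) x"
    and scaleC_one: "scaleC 1 x = x"
    and scaleC_of_real: "scaleC (complex_of_real r) x = scaleR r x"
    and norm_scaleC: "norm (scaleC a x) = cmod a * norm x"
    and scaleC_mult_left: "scaleC a (x * y) = scaleC a x * y"
    and scaleC_mult_right: "scaleC a (x * y) = x * scaleC a y"
    and adj_adj: "adj (adj x) = x"
    and adj_add: "adj (x + y) = adj x + adj y"
    and adj_scaleC: "adj (scaleC a x) = scaleC (cnj a) (adj x)"
    and adj_mult: "adj (x * y) = adj y * adj x"
    and cstar_identity: "norm (adj x * x) = norm x * norm x"

definition cinvertible :: "'a::cstar_algebra \<Rightarrow> bool" where
  "cinvertible a \<longleftrightarrow> (\<exists>b. b * a = 1 \<and> a * b = 1)"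

definition cinv :: "'a::cstar_algebra \<Rightarrow> 'a" where
  "cinv a = (THE b. b * a = 1 \<and> a * b = 1)"

definition cspectrum :: "'a::cstar_algebra \<Rightarrow> complex set" where
  "cspectrum a = {z. \<not> cinvertible (a - scaleC z 1)}"

definition cge :: "'a::cstar_algebra \<Rightarrow> 'a \<Rightarrow> bool" where
  "cge A B \<longleftrightarrow> cspectrum (A - B) \<subseteq> {z. Im z = 0 \<and> Re z \<ge> 0}"

definition cRe :: "'a::cstar_algebra \<Rightarrow> 'a" where
  "cRe W = scaleR (1/2) (W + adj W)"

definition cpos :: "'a::cstar_algebra set" where
  "cpos = {W. \<exists>\<epsilon>>0. cge (cRe W) (scaleR \<epsilon> 1)}"

definition cholomorphic_on :: "('a::cstar_algebra \<Rightarrow> 'a) \<Rightarrow> 'a set \<Rightarrow> bool" where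
  "cholomorphic_on f U \<longleftrightarrow>
     (\<forall>x\<in>U. \<exists>L. (f has_derivative L) (at x) \<and> (\<forall>c y. L (scaleC c y) = scaleC c (L y)))"

end

theory Submission
  imports Defs
begin

text \<open>Write \<open>A = V + \<eta>(W)\<close>. As \<open>Re \<eta>(W) \<ge> 0\<close>, \<open>Re A \<ge> 1/n\<close> with \<open>n = \<parallel>(Re V)\<^sup>-\<^sup>1\<parallel>\<close>,
  and an element with \<open>Re A \<ge> \<delta> > 0\<close> is invertible with \<open>\<parallel>A\<^sup>-\<^sup>1\<parallel> \<le> 1/\<delta>\<close>, because
  \<open>\<parallel>1 - \<tau> A\<parallel> < 1\<close> for small \<open>\<tau> > 0\<close>; so \<open>\<parallel>F\<^sub>V(W)\<parallel> \<le> n < b\<close>. For the real part of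
  the inverse, conjugating \<open>Re A - c A\<^sup>*A \<ge> \<delta> - c m\<^sup>2 > 0\<close> by \<open>A\<^sup>-\<^sup>1\<close> yields \<open>Re A\<^sup>-\<^sup>1 - c\<close>,
  and positivity survives the conjugation since \<open>A\<close> can be deformed to \<open>1\<close> through
  accretive elements without the conjugate becoming singular. These two estimates give
  \<open>F\<^sub>V(R\<^sub>b) \<subseteq> R\<^sub>b\<close> with a uniform margin; holomorphy is the chain rule with
  \<open>d(X\<^sup>-\<^sup>1) = -X\<^sup>-\<^sup>1 dX X\<^sup>-\<^sup>1\<close>. The order facts used on the way (sums of positive elements are
  positive, \<open>0 \<le> h \<le> M\<close> implies \<open>\<parallel>h\<parallel> \<le> M\<close>) rest on the norm of a selfadjoint element
  being its spectral radius, shown by averaging resolvents over roots of unity.\<close>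

lemma scaleC_zero_left [simp]: "scaleC 0 x = (0::'a::cstar_algebra)"
  using scaleC_of_real[of 0 x] by simp

lemma scaleC_zero_right [simp]: "scaleC c (0::'a::cstar_algebra) = 0"
  using scaleC_add_right[of c 0 0] by simp

lemma scaleC_minus_left: "scaleC (- c) x = - scaleC c (x::'a::cstar_algebra)"
  using scaleC_add_left[of c "- c" x] by (simp add: eq_neg_iff_add_eq_0 add.commute)

lemma scaleC_minus_right: "scaleC c (- x) = - scaleC c (x::'a::cstar_algebra)"
  using scaleC_add_right[of c x "- x"] by (simp add: eq_neg_iff_add_eq_0 add.commute)

lemma scaleC_diff_right: "scaleC c (x - y) = scaleC c x - scaleC c (y::'a::cstar_algebra)"
  using scaleC_add_right[of c x "- y"] by (simp add: scaleC_minus_right)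

lemma scaleC_sum_left: "scaleC (sum f A) x = (\<Sum>i\<in>A. scaleC (f i) (x::'a::cstar_algebra))"
  by (induction A rule: infinite_finite_induct) (auto simp: scaleC_add_left)

lemma scaleC_mult_scaleC: "scaleC a x * scaleC b y = scaleC (a * b) (x * (y::'a::cstar_algebra))"
  by (metis scaleC_mult_left scaleC_mult_right scaleC_scaleC)

lemma scaleC_power: "(scaleC c x) ^ n = scaleC (c ^ n) ((x::'a::cstar_algebra) ^ n)"
  by (induction n) (auto simp: scaleC_one scaleC_mult_scaleC)

lemma scaleC_one_mult: "scaleC c 1 * x = scaleC c (x::'a::cstar_algebra)"
  by (metis mult_1_left scaleC_mult_left)

lemma mult_scaleC_one: "x * scaleC c 1 = scaleC c (x::'a::cstar_algebra)"
  by (metis mult_1_right scaleC_mult_right)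

lemma bounded_linear_scaleC_left: "bounded_linear (\<lambda>c. scaleC c (x::'a::cstar_algebra))"
proof (rule bounded_linear_intro[where K = "norm x"])
  show "scaleC (a + b) x = scaleC a x + scaleC b x" for a b
    by (rule scaleC_add_left)
  show "scaleC (scaleR r a) x = scaleR r (scaleC a x)" for r a
    by (simp add: scaleR_conv_of_real scaleC_of_real flip: scaleC_scaleC)
  show "norm (scaleC a x) \<le> norm a * norm x" for a
    by (simp add: norm_scaleC)
qed

declare adj_adj [simp] adj_add [simp] adj_mult [simp]

lemma adj_zero [simp]: "adj (0::'a::cstar_algebra) = 0"
  using adj_add[of "0::'a" 0] by simp

lemma adj_minus [simp]: "adj (- x) = - adj (x::'a::cstar_algebra)"
  using adj_add[of x "- x"] by (simp add: eq_neg_iff_add_eq_0 add.commute del: adj_add)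

lemma adj_diff [simp]: "adj (x - y) = adj x - adj (y::'a::cstar_algebra)"
  using adj_add[of x "- y"] by simp

lemma adj_scaleR [simp]: "adj (scaleR r x) = scaleR r (adj (x::'a::cstar_algebra))"
  by (metis adj_scaleC complex_cnj_complex_of_real scaleC_of_real)

lemma adj_one [simp]: "adj (1::'a::cstar_algebra) = 1"
  by (metis adj_adj adj_mult mult_1_left)

lemma adj_power: "adj (x ^ n) = adj (x::'a::cstar_algebra) ^ n"
  by (induction n) (simp_all add: power_commutes)

lemma norm_adj [simp]: "norm (adj (x::'a::cstar_algebra)) = norm x"
proof -
  have le: "norm y \<le> norm (adj y)" for y :: 'a
  proof (cases "y = 0")
    case False
    have "norm y * norm y = norm (adj y * y)" by (simp add: cstar_identity)
    also have "\<dots> \<le> norm (adj y) * norm y" by (rule norm_mult_ineq)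
    finally show ?thesis using False by simp
  qed simp
  show ?thesis using le[of x] le[of "adj x"] by simp
qed

lemma adj_cRe [simp]: "adj (cRe x) = cRe (x::'a::cstar_algebra)"
  by (simp add: cRe_def add.commute)

lemma cRe_add: "cRe (x + y) = cRe x + cRe (y::'a::cstar_algebra)"
  by (simp add: cRe_def algebra_simps)

lemma cRe_diff: "cRe (x - y) = cRe x - cRe (y::'a::cstar_algebra)"
  by (simp add: cRe_def algebra_simps)

lemma cRe_scaleR: "cRe (scaleR r x) = scaleR r (cRe (x::'a::cstar_algebra))"
  by (simp add: cRe_def scaleR_add_right)

lemma cRe_selfadjoint: "adj x = x \<Longrightarrow> cRe x = (x::'a::cstar_algebra)"
  by (simp add: cRe_def flip: scaleR_2)

lemma cRe_one [simp]: "cRe (1::'a::cstar_algebra) = 1"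
  by (simp add: cRe_selfadjoint)

lemma norm_cRe_le: "norm (cRe (x::'a::cstar_algebra)) \<le> norm x"
  using norm_triangle_ineq[of x "adj x"] by (simp add: cRe_def)

lemma cinv_unique: "b * a = 1 \<Longrightarrow> a * b = 1 \<Longrightarrow> cinv a = (b::'a::cstar_algebra)"
  unfolding cinv_def
proof (rule the_equality)
  show "c = b" if "b * a = 1" "a * b = 1" "c * a = 1 \<and> a * c = 1" for c
    using that by (metis mult.assoc mult_1_left mult_1_right)
qed simp

lemma cinvertibleI: "b * a = 1 \<Longrightarrow> a * b = 1 \<Longrightarrow> cinvertible (a::'a::cstar_algebra)"
  unfolding cinvertible_def by blast

lemma cinvertible_one [simp]: "cinvertible (1::'a::cstar_algebra)"
  by (rule cinvertibleI[of 1]) simp_all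

lemma cinv_one [simp]: "cinv (1::'a::cstar_algebra) = 1"
  by (rule cinv_unique) simp_all

lemma cinv_left: "cinvertible a \<Longrightarrow> cinv a * a = (1::'a::cstar_algebra)"
  unfolding cinvertible_def using cinv_unique by metis

lemma cinv_right: "cinvertible a \<Longrightarrow> a * cinv a = (1::'a::cstar_algebra)"
  unfolding cinvertible_def using cinv_unique by metis

lemma cinv_neq_zero: "cinvertible a \<Longrightarrow> cinv a \<noteq> (0::'a::cstar_algebra)"
  using cinv_left by fastforce

lemma cinvertible_neq_zero: "cinvertible a \<Longrightarrow> a \<noteq> (0::'a::cstar_algebra)"
  using cinv_left by fastforce

lemma cinvertible_mult:
  assumes "cinvertible a" "cinvertible (b::'a::cstar_algebra)"
  shows "cinvertible (a * b)" and cinv_mult: "cinv (a * b) = cinv b * cinv a"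
proof -
  have "(cinv b * cinv a) * (a * b) = 1" "(a * b) * (cinv b * cinv a) = 1"
    using assms by (metis cinv_left cinv_right mult.assoc mult_1_left)+
  then show "cinvertible (a * b)" "cinv (a * b) = cinv b * cinv a"
    by (rule cinvertibleI, rule cinv_unique)
qed

lemma cinvertible_adj:
  assumes "cinvertible (a::'a::cstar_algebra)"
  shows "cinvertible (adj a)" and cinv_adj: "cinv (adj a) = adj (cinv a)"
proof -
  have "adj (cinv a) * adj a = 1" "adj a * adj (cinv a) = 1"
    using cinv_left[OF assms] cinv_right[OF assms] by (metis adj_mult adj_one)+
  then show "cinvertible (adj a)" "cinv (adj a) = adj (cinv a)"
    by (rule cinvertibleI, rule cinv_unique)
qed

lemma cinvertible_cinv:
  assumes "cinvertible (a::'a::cstar_algebra)"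
  shows "cinvertible (cinv a)" and cinv_cinv: "cinv (cinv a) = a"
  using cinvertibleI[of a] cinv_unique[of a] cinv_left[OF assms] cinv_right[OF assms] by simp_all

lemma cinvertible_scaleC:
  assumes "cinvertible (a::'a::cstar_algebra)" "c \<noteq> 0"
  shows "cinvertible (scaleC c a)"
  by (rule cinvertibleI[of "scaleC (inverse c) (cinv a)"])
     (use assms in \<open>simp_all add: scaleC_mult_scaleC cinv_left cinv_right scaleC_one\<close>)

lemma cinvertible_uminus: "cinvertible x \<Longrightarrow> cinvertible (- x :: 'a::cstar_algebra)"
  using cinvertible_scaleC[of x "- 1"] by (simp add: scaleC_minus_left scaleC_one)

lemma cinvertible_of_cinvertible_scaleR:
  assumes "cinvertible (scaleR c a)" "c \<noteq> 0"
  shows "cinvertible (a::'a::cstar_algebra)"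
    and cinv_scaleR: "cinv a = scaleR c (cinv (scaleR c a))"
proof -
  have "scaleR c (cinv (scaleR c a)) * a = 1" "a * scaleR c (cinv (scaleR c a)) = 1"
    using cinv_left[OF assms(1)] cinv_right[OF assms(1)] by simp_all
  then show "cinvertible a" "cinv a = scaleR c (cinv (scaleR c a))"
    by (rule cinvertibleI, rule cinv_unique)
qed

lemma cinv_diff:
  assumes "cinvertible a" "cinvertible (b::'a::cstar_algebra)"
  shows "cinv b - cinv a = cinv b * (a - b) * cinv a"
  using assms by (simp add: algebra_simps cinv_left cinv_right mult.assoc)

lemma norm_mult_le3: "norm (a * b * c) \<le> norm a * norm b * norm (c::'a::real_normed_algebra)"
  by (metis mult_right_mono norm_ge_zero norm_mult_ineq order_trans)

lemma
  fixes h :: "'a::cstar_algebra"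
  assumes "norm h < 1"
  shows cinvertible_one_minus: "cinvertible (1 - h)"
    and norm_cinv_one_minus_le: "norm (cinv (1 - h)) \<le> 1 / (1 - norm h)"
proof -
  have summable: "summable (\<lambda>n. h ^ n)"
    by (rule summable_comparison_test'[of "\<lambda>n. norm h ^ n" 0])
       (auto simp: assms norm_power_ineq summable_geometric)
  define S where "S = (\<Sum>n. h ^ n)"
  have telescope: "(\<lambda>n. h ^ n - h ^ Suc n) sums 1"
    using telescope_sums'[OF LIMSEQ_power_zero[OF assms]] by simp
  have "(\<lambda>n. (1 - h) * h ^ n) sums ((1 - h) * S)" "(\<lambda>n. h ^ n * (1 - h)) sums (S * (1 - h))"
    unfolding S_def using summable by (simp_all add: summable_sums sums_mult sums_mult2)
  moreover have "(\<lambda>n. (1 - h) * h ^ n) = (\<lambda>n. h ^ n - h ^ Suc n)"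
    "(\<lambda>n. h ^ n * (1 - h)) = (\<lambda>n. h ^ n - h ^ Suc n)"
    by (simp_all add: algebra_simps power_commutes)
  ultimately have right: "(1 - h) * S = 1" and left: "S * (1 - h) = 1"
    using telescope sums_unique2 by fastforce+
  show "cinvertible (1 - h)" by (rule cinvertibleI[OF left right])
  have "S = 1 + h * S" using right by (simp add: algebra_simps)
  then have "norm S \<le> 1 + norm h * norm S"
    by (metis norm_mult_ineq norm_one norm_triangle_le add_left_mono)
  then have "norm S * (1 - norm h) \<le> 1" by (simp add: algebra_simps)
  then show "norm (cinv (1 - h)) \<le> 1 / (1 - norm h)"
    using assms cinv_unique[OF left right] by (simp add: field_simps)
qed

lemma
  fixes a b :: "'a::cstar_algebra"
  assumes a: "cinvertible a" and close: "norm (b - a) * norm (cinv a) \<le> 1/2"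
  shows cinvertible_near: "cinvertible b"
    and norm_cinv_diff_le: "norm (cinv b - cinv a) \<le> 2 * norm (cinv a)^2 * norm (b - a)"
proof -
  define h where "h = cinv a * (a - b)"
  have "norm h \<le> norm (b - a) * norm (cinv a)"
    unfolding h_def by (metis mult.commute norm_minus_commute norm_mult_ineq)
  then have h: "norm h \<le> 1/2" using close by linarith
  have "a * h = a - b"
    unfolding h_def by (metis cinv_right[OF a] mult.assoc mult_1_left)
  then have b_eq: "b = a * (1 - h)" by (simp add: right_diff_distrib)
  have inv: "cinvertible (1 - h)" using h by (simp add: cinvertible_one_minus)
  have "norm (cinv (1 - h)) \<le> 1 / (1 - norm h)" using h by (simp add: norm_cinv_one_minus_le)
  also have "\<dots> \<le> 2" using h by (simp add: field_simps)
  finally have inv_le: "norm (cinv (1 - h)) \<le> 2" .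
  show b: "cinvertible b" using b_eq cinvertible_mult[OF a inv] by simp
  have "norm (cinv b) \<le> norm (cinv (1 - h)) * norm (cinv a)"
    using b_eq cinv_mult[OF a inv] by (simp add: norm_mult_ineq)
  also have "\<dots> \<le> 2 * norm (cinv a)" by (intro mult_right_mono inv_le) auto
  finally have cinv_b: "norm (cinv b) \<le> 2 * norm (cinv a)" .
  have "norm (cinv b - cinv a) \<le> norm (cinv b) * norm (a - b) * norm (cinv a)"
    unfolding cinv_diff[OF a b] by (rule norm_mult_le3)
  also have "\<dots> \<le> 2 * norm (cinv a) * norm (b - a) * norm (cinv a)"
    using cinv_b by (simp add: norm_minus_commute mult_right_mono)
  finally show "norm (cinv b - cinv a) \<le> 2 * norm (cinv a)^2 * norm (b - a)"
    by (simp add: power2_eq_square algebra_simps)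
qed

lemma isCont_cinv:
  fixes a :: "'a::cstar_algebra"
  assumes a: "cinvertible a"
  shows "isCont cinv a"
proof -
  define C where "C = norm (cinv a)"
  have C: "C > 0" unfolding C_def using cinv_neq_zero[OF a] by simp
  have "\<forall>\<^sub>F x in at a. norm (cinv x - cinv a) \<le> 2 * C^2 * norm (x - a)"
    unfolding eventually_at
  proof (intro exI[of _ "1 / (2 * C)"] conjI ballI impI)
    fix x assume "x \<in> UNIV" "x \<noteq> a \<and> dist x a < 1 / (2 * C)"
    then have "norm (x - a) * C \<le> 1/2" using C by (simp add: dist_norm field_simps)
    then show "norm (cinv x - cinv a) \<le> 2 * C^2 * norm (x - a)"
      using norm_cinv_diff_le[OF a] unfolding C_def by auto
  qed (use C in simp)
  moreover have "((\<lambda>x. 2 * C^2 * norm (x - a)) \<longlongrightarrow> 0) (at a)"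
    by (intro tendsto_mult_right_zero tendsto_norm_zero) (auto intro: LIM_zero tendsto_ident_at)
  ultimately have "((\<lambda>x. cinv x - cinv a) \<longlongrightarrow> 0) (at a)"
    by (rule Lim_null_comparison)
  then show ?thesis unfolding isCont_def by (simp add: Lim_null[symmetric])
qed

lemma has_derivative_cinv:
  fixes a :: "'a::cstar_algebra"
  assumes a: "cinvertible a"
  shows "(cinv has_derivative (\<lambda>h. - (cinv a * h * cinv a))) (at a)"
  unfolding has_derivative_iff_norm
proof
  show "bounded_linear (\<lambda>h. - (cinv a * h * cinv a))"
    by (intro bounded_linear_minus bounded_linear_mult_const bounded_linear_const_mult
        bounded_linear_ident)
  define C where "C = norm (cinv a)"
  have C: "C > 0" unfolding C_def using cinv_neq_zero[OF a] by simp
  have "\<forall>\<^sub>F y in at a.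
      norm (norm (cinv y - cinv a - - (cinv a * (y - a) * cinv a)) / norm (y - a))
      \<le> C * norm (cinv y - cinv a)"
    unfolding eventually_at
  proof (intro exI[of _ "1 / (2 * C)"] conjI ballI impI)
    fix y assume "y \<in> UNIV" and y: "y \<noteq> a \<and> dist y a < 1 / (2 * C)"
    then have "norm (y - a) * C \<le> 1/2" using C by (simp add: dist_norm field_simps)
    then have y_inv: "cinvertible y" using cinvertible_near[OF a] unfolding C_def by auto
    have "cinv y - cinv a - - (cinv a * (y - a) * cinv a) = (cinv a - cinv y) * (y - a) * cinv a"
      using cinv_diff[OF a y_inv] by (simp add: algebra_simps)
    then have "norm (cinv y - cinv a - - (cinv a * (y - a) * cinv a))
        \<le> norm (cinv a - cinv y) * norm (y - a) * C"
      unfolding C_def by (metis norm_mult_le3)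
    then show "norm (norm (cinv y - cinv a - - (cinv a * (y - a) * cinv a)) / norm (y - a))
        \<le> C * norm (cinv y - cinv a)"
      using y by (simp add: pos_divide_le_eq norm_minus_commute[of "cinv a"] ac_simps)
  qed (use C in simp)
  moreover have "((\<lambda>y. C * norm (cinv y - cinv a)) \<longlongrightarrow> 0) (at a)"
    using isCont_cinv[OF a] unfolding isCont_def
    by (intro tendsto_mult_right_zero tendsto_norm_zero) (simp add: Lim_null[symmetric])
  ultimately show "((\<lambda>y. norm (cinv y - cinv a - - (cinv a * (y - a) * cinv a)) / norm (y - a))
      \<longlongrightarrow> 0) (at a)"
    by (rule Lim_null_comparison)
qed

section \<open>Spectrum of selfadjoint elements\<close>

lemma cinvertible_sub_scaleC_one:
  fixes x :: "'a::cstar_algebra"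
  assumes "norm x < cmod z"
  shows "cinvertible (x - scaleC z 1)"
proof -
  have z: "z \<noteq> 0" using assms by auto
  have "norm (scaleC (1 / z) x) < 1"
    using assms z by (simp add: norm_scaleC norm_divide field_simps)
  then have "cinvertible (scaleC (- z) (1 - scaleC (1 / z) x))"
    using z by (intro cinvertible_scaleC cinvertible_one_minus) auto
  moreover have "scaleC (- z) (1 - scaleC (1 / z) x) = x - scaleC z 1"
    using z by (simp add: scaleC_diff_right scaleC_scaleC scaleC_minus_left scaleC_one)
  ultimately show ?thesis by simp
qed

lemma norm_add_imaginary_one_le:
  fixes h :: "'a::cstar_algebra"
  assumes sa: "adj h = h"
  shows "norm (h + scaleC (\<i> * complex_of_real t) 1) ^ 2 \<le> norm h ^ 2 + t ^ 2"
proof -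
  define c where "c = \<i> * complex_of_real t"
  define k where "k = h + scaleC c 1"
  have "adj k * k = (h + scaleC (- c) 1) * (h + scaleC c 1)"
    unfolding k_def c_def by (simp add: adj_scaleC sa)
  also have "\<dots> = h * h + (scaleC c h + scaleC (- c) h) + scaleC (- c * c) 1"
    by (simp add: distrib_left distrib_right scaleC_one_mult mult_scaleC_one scaleC_mult_scaleC
        scaleC_add_right scaleC_scaleC)
  also have "scaleC c h + scaleC (- c) h = 0"
    by (simp add: scaleC_minus_left)
  also have "- c * c = complex_of_real (t ^ 2)"
    unfolding c_def by (simp add: power2_eq_square algebra_simps)
  finally have "adj k * k = h * h + scaleR (t ^ 2) 1"
    by (simp only: scaleC_of_real add_0_right)
  then have "norm k * norm k = norm (h * h + scaleR (t ^ 2) 1)"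
    by (metis cstar_identity)
  also have "\<dots> \<le> norm h * norm h + t ^ 2"
    by (rule order_trans[OF norm_triangle_ineq]) (simp add: norm_mult_ineq add_mono)
  finally show ?thesis
    unfolding k_def c_def by (simp add: power2_eq_square)
qed

text \<open>\<open>\<parallel>h + i t\<parallel>\<^sup>2 \<le> \<parallel>h\<parallel>\<^sup>2 + t\<^sup>2\<close> while \<open>\<bar>z + i t\<bar>\<^sup>2 = \<bar>z\<bar>\<^sup>2 + 2 t Im z + t\<^sup>2\<close>; for large \<open>t\<close> of
  the sign of \<open>Im z\<close>, the point \<open>z + i t\<close> lies outside the disc of radius \<open>\<parallel>h + i t\<parallel>\<close>,
  where everything is in the resolvent set of \<open>h + i t\<close>.\<close>
lemma selfadjoint_cinvertible_sub_nonreal: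
  fixes h :: "'a::cstar_algebra"
  assumes sa: "adj h = h" and z: "Im z \<noteq> 0"
  shows "cinvertible (h - scaleC z 1)"
proof (rule ccontr)
  assume not_inv: "\<not> cinvertible (h - scaleC z 1)"
  define t where "t = (norm h ^ 2 + 1) / (2 * Im z)"
  define c where "c = \<i> * complex_of_real t"
  have "(h + scaleC c 1) - scaleC (z + c) 1 = h - scaleC z 1"
    by (simp add: scaleC_add_left)
  then have "\<not> norm (h + scaleC c 1) < cmod (z + c)"
    using not_inv cinvertible_sub_scaleC_one[of "h + scaleC c 1" "z + c"] by metis
  then have "cmod (z + c) ^ 2 \<le> norm (h + scaleC c 1) ^ 2"
    by (intro power_mono) auto
  also have "\<dots> \<le> norm h ^ 2 + t ^ 2"
    unfolding c_def by (rule norm_add_imaginary_one_le[OF sa])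
  finally have "cmod (z + c) ^ 2 \<le> norm h ^ 2 + t ^ 2" .
  moreover have "cmod (z + c) ^ 2 = Re z ^ 2 + (Im z + t) ^ 2"
    unfolding c_def by (simp add: cmod_power2)
  moreover have "(Im z + t) ^ 2 = Im z ^ 2 + (norm h ^ 2 + 1) + t ^ 2"
    unfolding t_def using z by (simp add: power2_eq_square field_simps)
  ultimately show False
    using zero_le_power2[of "Re z"] zero_le_power2[of "Im z"] by linarith
qed

section \<open>Spectral radius of selfadjoint elements\<close>

lemma sum_power_mult_one_minus: "(\<Sum>i<n. x ^ i) * (1 - x) = 1 - (x::'a::ring_1) ^ n"
proof (induction n)
  case (Suc n)
  have "(\<Sum>i<Suc n. x ^ i) * (1 - x) = (\<Sum>i<n. x ^ i) * (1 - x) + x ^ n * (1 - x)"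
    by (simp add: distrib_right)
  also have "\<dots> = 1 - x ^ Suc n"
    using Suc by (simp add: right_diff_distrib power_Suc2 power_commutes)
  finally show ?case .
qed simp

definition unit_root :: "nat \<Rightarrow> nat \<Rightarrow> complex" where
  "unit_root n k = exp (2 * of_real pi * \<i> * of_nat k / of_nat n)"

lemma norm_unit_root [simp]: "cmod (unit_root n k) = 1"
  by (simp add: unit_root_def)

lemma unit_root_power_n: "n \<noteq> 0 \<Longrightarrow> unit_root n k ^ n = 1"
  unfolding unit_root_def by (rule complex_root_unity)

lemma sum_unit_root_power:
  assumes "0 < j" "j < n"
  shows "(\<Sum>k<n. unit_root n k ^ j) = 0"
proof -
  have "unit_root n k ^ j = unit_root n j ^ k" for k
    unfolding unit_root_def by (simp add: exp_of_nat_mult[symmetric] algebra_simps)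
  then have "(\<Sum>k<n. unit_root n k ^ j) = (\<Sum>k<n. unit_root n j ^ k)"
    by simp
  also have "unit_root n j \<noteq> 1"
    using complex_root_unity_eq_1[of n j] assms unfolding unit_root_def
    by (auto dest: dvd_imp_le)
  then have "(\<Sum>k<n. unit_root n j ^ k) = (1 - unit_root n j ^ n) / (1 - unit_root n j)"
    by (simp add: sum_gp_strict)
  also have "\<dots> = 0"
    using unit_root_power_n[of n j] assms by simp
  finally show ?thesis .
qed

definition mean_resolvent :: "'a::cstar_algebra \<Rightarrow> nat \<Rightarrow> real \<Rightarrow> 'a" where
  "mean_resolvent x n r =
    scaleR (1 / real n) (\<Sum>k<n. cinv (1 - scaleC (unit_root n k * complex_of_real r) x))"

text \<open>Since \<open>1 - a\<^sup>n = 1 - (\<omega> a)\<^sup>n\<close> for every \<open>n\<close>-th root of unity \<open>\<omega>\<close>, each resolvent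
  \<open>(1 - \<omega> a)\<^sup>-\<^sup>1\<close> turns \<open>1 - a\<^sup>n\<close> into \<open>\<Sum>j<n. \<omega>\<^sup>j a\<^sup>j\<close>, and averaging over \<open>\<omega>\<close>
  leaves only the term \<open>j = 0\<close>.\<close>
lemma one_minus_power_mult_mean_resolvent:
  fixes x :: "'a::cstar_algebra"
  assumes n: "0 < n" and inv: "\<And>k. cinvertible (1 - scaleC (unit_root n k * complex_of_real r) x)"
  shows "(1 - (scaleR r x) ^ n) * mean_resolvent x n r = 1"
proof -
  define a where "a = scaleR r x"
  have scale: "scaleC (unit_root n k * complex_of_real r) x = scaleC (unit_root n k) a" for k
    unfolding a_def by (simp add: scaleC_of_real flip: scaleC_scaleC)
  have summand: "(1 - a ^ n) * cinv (1 - scaleC (unit_root n k) a)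
      = (\<Sum>j<n. scaleC (unit_root n k ^ j) (a ^ j))" for k
  proof -
    have "1 - a ^ n = 1 - (scaleC (unit_root n k) a) ^ n"
      using unit_root_power_n[of n k] n by (simp add: scaleC_power scaleC_one)
    also have "\<dots> = (\<Sum>j<n. (scaleC (unit_root n k) a) ^ j) * (1 - scaleC (unit_root n k) a)"
      by (rule sum_power_mult_one_minus[symmetric])
    finally show ?thesis
      using cinv_right[OF inv[of k, unfolded scale]] by (simp add: scaleC_power mult.assoc)
  qed
  have "(1 - a ^ n) * mean_resolvent x n r
      = scaleR (1 / real n) (\<Sum>k<n. \<Sum>j<n. scaleC (unit_root n k ^ j) (a ^ j))"
    unfolding mean_resolvent_def scale by (simp add: sum_distrib_left summand)
  also have "(\<Sum>k<n. \<Sum>j<n. scaleC (unit_root n k ^ j) (a ^ j))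
      = (\<Sum>j<n. scaleC (\<Sum>k<n. unit_root n k ^ j) (a ^ j))"
    by (subst sum.swap) (simp add: scaleC_sum_left)
  also have "\<dots> = (\<Sum>j<n. if j = 0 then scaleC (of_nat n) 1 else 0)"
    by (rule sum.cong) (auto simp: sum_unit_root_power)
  also have "\<dots> = scaleR (real n) 1"
    using n scaleC_of_real[of "real n" "1::'a"] by simp
  finally show ?thesis
    using n unfolding a_def by simp
qed

lemma norm_mean_resolvent_diff_less:
  fixes x :: "'a::cstar_algebra"
  assumes n: "0 < n" and close: "\<And>k. norm (cinv (1 - scaleC (unit_root n k * complex_of_real r) x)
      - cinv (1 - scaleC (unit_root n k * complex_of_real s) x)) < e"
  shows "norm (mean_resolvent x n r - mean_resolvent x n s) < e"
proof -
  let ?g = "\<lambda>k. cinv (1 - scaleC (unit_root n k * complex_of_real r) x)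
      - cinv (1 - scaleC (unit_root n k * complex_of_real s) x)"
  have "norm (sum ?g {..<n}) \<le> (\<Sum>k<n. norm (?g k))"
    by (rule norm_sum)
  also have "\<dots> < (\<Sum>k<n. e)"
    using n close by (intro sum_strict_mono) auto
  finally have "norm (sum ?g {..<n}) < real n * e" by simp
  moreover have "mean_resolvent x n r - mean_resolvent x n s = scaleR (1 / real n) (sum ?g {..<n})"
    unfolding mean_resolvent_def by (simp add: sum_subtractf scaleR_diff_right)
  ultimately show ?thesis
    using n by (simp add: field_simps)
qed

lemma norm_right_inverse_sub_one_le:
  fixes y g :: "'a::real_normed_algebra_1"
  assumes inverse: "(1 - y) * g = 1" and y: "norm y \<le> 1/9"
  shows "norm (g - 1) \<le> 1/8"
proof -
  have g_sub_one: "g - 1 = y * g" using inverse by (simp add: algebra_simps)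
  have yg: "norm (y * g) \<le> (1/9) * norm g"
    using y norm_mult_ineq[of y g] mult_right_mono[OF y norm_ge_zero[of g]] by linarith
  have "norm g \<le> 1 + norm (g - 1)"
    using norm_triangle_ineq[of 1 "g - 1"] by simp
  then have "norm g \<le> 9/8" using yg unfolding g_sub_one by linarith
  then show ?thesis using yg unfolding g_sub_one by linarith
qed

lemma norm_le_of_right_inverse_near_one:
  fixes y g :: "'a::real_normed_algebra_1"
  assumes inverse: "(1 - y) * g = 1" and g: "norm (g - 1) \<le> 1/4"
  shows "norm y \<le> 1/3"
proof -
  have "y = (1 - y) * (g - 1)" using inverse by (simp add: algebra_simps)
  then have "norm y \<le> norm (1 - y) * norm (g - 1)" by (metis norm_mult_ineq)
  also have "\<dots> \<le> (1 + norm y) * (1/4)"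
    using norm_triangle_ineq4[of 1 y] g by (intro mult_mono) auto
  finally show ?thesis by simp
qed

lemma eventually_norm_power_scaleR_small:
  fixes x :: "'a::real_normed_algebra_1"
  assumes bounded: "\<forall>\<^sub>F n in sequentially. norm ((scaleR r x) ^ n) \<le> 1"
    and q: "0 \<le> q" "q < r" and \<epsilon>: "\<epsilon> > 0"
  shows "\<forall>\<^sub>F n in sequentially. norm ((scaleR q x) ^ n) \<le> \<epsilon>"
proof -
  have r: "r > 0" using q by simp
  obtain N where N: "(q / r) ^ N < \<epsilon>"
    using real_arch_pow_inv[of \<epsilon> "q / r"] q r \<epsilon> by auto
  have "\<forall>\<^sub>F n in sequentially. N \<le> n" by (rule eventually_ge_at_top)
  with bounded show ?thesis
  proof eventually_elim
    case (elim n)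
    have power_eq: "(scaleR q x) ^ n = scaleR ((q / r) ^ n) ((scaleR r x) ^ n)"
      using r by (auto simp: scaleR_power power_divide)
    have "norm ((scaleR q x) ^ n) = (q / r) ^ n * norm ((scaleR r x) ^ n)"
      unfolding power_eq norm_scaleR using q r by simp
    also have "\<dots> \<le> (q / r) ^ n" using elim q r by (simp add: mult_left_le)
    also have "\<dots> \<le> (q / r) ^ N" using elim q r by (intro power_decreasing) auto
    finally show ?case using N by simp
  qed
qed

text \<open>If \<open>1 - (r x)\<^sup>n\<close> has right inverses \<open>M n r\<close> depending uniformly continuously on
  \<open>r \<in> [0, R]\<close>, eventual boundedness of the powers \<open>(r x)\<^sup>n\<close> propagates in steps of \<open>d/2\<close>
  from \<open>r = 0\<close> to \<open>r = R\<close>.\<close>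
context
  fixes x :: "'a::real_normed_algebra_1" and M :: "nat \<Rightarrow> real \<Rightarrow> 'a" and R d :: real
  assumes right_inverse:
      "\<And>n r. 0 < n \<Longrightarrow> 0 \<le> r \<Longrightarrow> r \<le> R \<Longrightarrow> (1 - (scaleR r x) ^ n) * M n r = 1"
    and close: "\<And>n r s. 0 < n \<Longrightarrow> 0 \<le> r \<Longrightarrow> r \<le> R \<Longrightarrow> 0 \<le> s \<Longrightarrow> s \<le> R \<Longrightarrow>
      \<bar>r - s\<bar> < d \<Longrightarrow> norm (M n r - M n s) < 1/8"
    and d: "d > 0"
begin

lemma eventually_norm_power_le_one_step:
  assumes r: "0 \<le> r" "r \<le> R" and bounded: "\<forall>\<^sub>F n in sequentially. norm ((scaleR r x) ^ n) \<le> 1"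
  shows "\<forall>\<^sub>F n in sequentially. norm ((scaleR (min R (r + d/2)) x) ^ n) \<le> 1"
proof -
  define r' where "r' = min R (r + d/2)"
  define q where "q = max 0 (r - d/4)"
  have q: "0 \<le> q" "q \<le> R" "0 \<le> r'" "r' \<le> R" "\<bar>r' - q\<bar> < d"
    using r d unfolding r'_def q_def by auto
  have "\<forall>\<^sub>F n in sequentially. norm ((scaleR q x) ^ n) \<le> 1/9"
  proof (cases "q = 0")
    case True
    then show ?thesis
      by (intro eventually_mono[OF eventually_gt_at_top[of "0::nat"]]) (simp add: power_0_left)
  next
    case False
    then have "q < r" using d unfolding q_def by auto
    then show ?thesis by (rule eventually_norm_power_scaleR_small[OF bounded q(1)]) simp
  qed
  moreover have "\<forall>\<^sub>F n in sequentially. 0 < n" by (rule eventually_gt_at_top)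
  ultimately show ?thesis
    unfolding r'_def[symmetric]
  proof eventually_elim
    case (elim n)
    have "norm (M n q - 1) \<le> 1/8"
      using right_inverse[OF elim(2) q(1,2)] elim(1) by (rule norm_right_inverse_sub_one_le)
    moreover have "norm (M n r' - M n q) < 1/8"
      using close[OF elim(2) q(3,4,1,2,5)] .
    ultimately have "norm (M n r' - 1) \<le> 1/4"
      using norm_triangle_ineq[of "M n r' - M n q" "M n q - 1"] by simp
    then have "norm ((scaleR r' x) ^ n) \<le> 1/3"
      by (rule norm_le_of_right_inverse_near_one[OF right_inverse[OF elim(2) q(3,4)]])
    then show ?case by simp
  qed
qed

lemma eventually_norm_power_le_one_bootstrap:
  assumes R: "0 \<le> R"
  shows "\<forall>\<^sub>F n in sequentially. norm ((scaleR R x) ^ n) \<le> 1"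
proof -
  have "\<forall>\<^sub>F n in sequentially. norm ((scaleR (min R (real k * d/2)) x) ^ n) \<le> 1" for k
  proof (induction k)
    case 0
    show ?case
      using R by (intro eventually_mono[OF eventually_gt_at_top[of "0::nat"]])
        (simp add: power_0_left)
  next
    case (Suc k)
    have "min R (min R (real k * d/2) + d/2) = min R (real (Suc k) * d/2)"
      using d by (auto simp: min_def algebra_simps)
    then show ?case
      using eventually_norm_power_le_one_step[OF _ _ Suc] R d by simp
  qed
  moreover obtain k where "2 * R / d \<le> real k" using real_arch_simple by blast
  then have "min R (real k * d/2) = R" using d by (simp add: field_simps)
  ultimately show ?thesis by metis
qed

end

lemma eventually_norm_power_le_one_of_cinvertible:
  fixes x :: "'a::cstar_algebra"
  assumes R: "0 < R" and inv: "\<And>\<mu>. cmod \<mu> \<le> R \<Longrightarrow> cinvertible (1 - scaleC \<mu> x)"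
  shows "\<forall>\<^sub>F n in sequentially. norm ((scaleR R x) ^ n) \<le> 1"
proof -
  define f where "f \<mu> = cinv (1 - scaleC \<mu> x)" for \<mu>
  have "isCont f \<mu>" if "\<mu> \<in> cball 0 R" for \<mu>
    unfolding f_def using inv that
    by (intro isCont_o2[OF _ isCont_cinv] continuous_intros
        bounded_linear.continuous[OF bounded_linear_scaleC_left]) auto
  then have "uniformly_continuous_on (cball 0 R) f"
    by (intro compact_uniformly_continuous continuous_at_imp_continuous_on) auto
  then obtain d where d: "0 < d" and uc: "\<And>a b. a \<in> cball 0 R \<Longrightarrow> b \<in> cball 0 R \<Longrightarrow>
      dist b a < d \<Longrightarrow> dist (f b) (f a) < 1/8"
    by (rule uniformly_continuous_onE[where \<epsilon> = "1/8"]) auto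
  have "(1 - (scaleR r x) ^ n) * mean_resolvent x n r = 1" if "0 < n" "0 \<le> r" "r \<le> R" for n r
    using inv that by (intro one_minus_power_mult_mean_resolvent) (simp_all add: norm_mult)
  moreover have "norm (mean_resolvent x n r - mean_resolvent x n s) < 1/8"
    if "0 < n" "0 \<le> r" "r \<le> R" "0 \<le> s" "s \<le> R" "\<bar>r - s\<bar> < d" for n r s
    using that uc[of "unit_root n _ * complex_of_real s" "unit_root n _ * complex_of_real r"]
    unfolding f_def
    by (intro norm_mean_resolvent_diff_less)
       (simp_all add: norm_mult dist_norm abs_minus_commute flip: right_diff_distrib of_real_diff)
  ultimately show ?thesis
    using d R by (intro eventually_norm_power_le_one_bootstrap) auto
qed

lemma norm_power_two_power_selfadjoint:
  fixes h :: "'a::cstar_algebra"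
  assumes "adj h = h"
  shows "norm (h ^ 2 ^ k) = norm h ^ 2 ^ k"
proof (induction k)
  case (Suc k)
  have "h ^ 2 ^ Suc k = adj (h ^ 2 ^ k) * h ^ 2 ^ k"
    using assms by (simp add: adj_power flip: power_add mult_2)
  then show ?case
    using Suc by (simp add: cstar_identity flip: power_add mult_2)
qed simp

text \<open>The resolvent bound gives \<open>\<parallel>h\<^sup>n\<parallel> \<le> \<rho>\<^sup>n\<close> for large \<open>n\<close>, and \<open>\<parallel>h\<^sup>n\<parallel> = \<parallel>h\<parallel>\<^sup>n\<close> when \<open>n\<close>
  is a power of \<open>2\<close>.\<close>
lemma selfadjoint_norm_le:
  fixes h :: "'a::cstar_algebra"
  assumes sa: "adj h = h" and \<rho>: "\<rho> > 0"
    and inv: "\<And>z. \<rho> \<le> cmod z \<Longrightarrow> cinvertible (h - scaleC z 1)"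
  shows "norm h \<le> \<rho>"
proof -
  have "cinvertible (1 - scaleC \<mu> h)" if "cmod \<mu> \<le> 1 / \<rho>" for \<mu>
  proof (cases "\<mu> = 0")
    case False
    have "cinvertible (scaleC (- \<mu>) (h - scaleC (1 / \<mu>) 1))"
      using that False \<rho> by (intro cinvertible_scaleC inv) (auto simp: norm_divide field_simps)
    moreover have "scaleC (- \<mu>) (h - scaleC (1 / \<mu>) 1) = 1 - scaleC \<mu> h"
      using False by (simp add: scaleC_diff_right scaleC_scaleC scaleC_minus_left scaleC_one)
    ultimately show ?thesis by simp
  qed simp
  then have "\<forall>\<^sub>F n in sequentially. norm ((scaleR (1 / \<rho>) h) ^ n) \<le> 1"
    using \<rho> by (intro eventually_norm_power_le_one_of_cinvertible) auto
  then obtain N where N: "\<And>n. N \<le> n \<Longrightarrow> norm ((scaleR (1 / \<rho>) h) ^ n) \<le> 1"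
    unfolding eventually_sequentially by blast
  define n :: nat where "n = 2 ^ N"
  have "N \<le> n" "0 < n" unfolding n_def by (simp_all add: less_imp_le)
  have "(norm h / \<rho>) ^ n = norm ((scaleR (1 / \<rho>) h) ^ n)"
    using \<rho> unfolding n_def by (simp add: scaleR_power norm_power_two_power_selfadjoint[OF sa]
        power_divide)
  also have "\<dots> \<le> 1" using N[OF \<open>N \<le> n\<close>] .
  finally have "norm h / \<rho> \<le> 1"
    using power_le_one_iff[of "norm h / \<rho>" n] \<rho> \<open>0 < n\<close> by simp
  then show ?thesis using \<rho> by (simp add: field_simps)
qed

section \<open>Order on selfadjoint elements\<close>

lemma cge_iff_nonneg: "cge A B \<longleftrightarrow> cge (A - B) (0::'a::cstar_algebra)"
  by (simp add: cge_def)

lemma selfadjoint_cge_zero_iff: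
  fixes h :: "'a::cstar_algebra"
  assumes sa: "adj h = h"
  shows "cge h 0 \<longleftrightarrow> (\<forall>s>0. cinvertible (h + scaleR s 1))"
proof
  assume nonneg: "cge h 0"
  show "\<forall>s>0. cinvertible (h + scaleR s 1)"
  proof (intro allI impI)
    fix s :: real assume "s > 0"
    then have "complex_of_real (- s) \<notin> cspectrum h"
      using nonneg unfolding cge_def by (auto dest!: subsetD)
    then show "cinvertible (h + scaleR s 1)"
      unfolding cspectrum_def by (simp add: scaleC_minus_left scaleC_of_real)
  qed
next
  assume inv: "\<forall>s>0. cinvertible (h + scaleR s 1)"
  show "cge h 0"
    unfolding cge_def cspectrum_def
  proof (intro subsetI CollectI)
    fix z assume "z \<in> {z. \<not> cinvertible (h - 0 - scaleC z 1)}"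
    then have not_inv: "\<not> cinvertible (h - scaleC z 1)" by simp
    then have "Im z = 0" using selfadjoint_cinvertible_sub_nonreal[OF sa] by blast
    then have "z = complex_of_real (Re z)" by (simp add: complex_eq_iff)
    then have "h - scaleC z 1 = h + scaleR (- Re z) 1"
      by (metis scaleC_of_real diff_conv_add_uminus scaleR_minus_left)
    then have "\<not> Re z < 0" using not_inv inv[rule_format, of "- Re z"] by auto
    then show "Im z = 0 \<and> 0 \<le> Re z" using \<open>Im z = 0\<close> by simp
  qed
qed

lemma cge_scaleR_one: "0 \<le> c \<Longrightarrow> cge (scaleR c 1) (0::'a::cstar_algebra)"
proof (subst selfadjoint_cge_zero_iff, simp, intro allI impI)
  fix s :: real assume "0 \<le> c" "0 < s"
  then have "cinvertible (scaleC (complex_of_real (c + s)) (1::'a))"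
    by (intro cinvertible_scaleC) (auto simp del: of_real_add)
  then show "cinvertible (scaleR c 1 + scaleR s (1::'a))"
    by (simp add: scaleC_of_real scaleR_add_left del: of_real_add)
qed

lemma cge_scaleR:
  fixes a :: "'a::cstar_algebra"
  assumes sa: "adj a = a" and nonneg: "cge a 0" and c: "0 \<le> c"
  shows "cge (scaleR c a) 0"
proof (cases "c = 0")
  case True
  then show ?thesis using cge_scaleR_one[of 0] by simp
next
  case False
  show ?thesis
  proof (subst selfadjoint_cge_zero_iff, simp add: sa, intro allI impI)
    fix s :: real assume "0 < s"
    then have "cinvertible (a + scaleR (s / c) 1)"
      using nonneg c False unfolding selfadjoint_cge_zero_iff[OF sa] by simp
    then have "cinvertible (scaleC (complex_of_real c) (a + scaleR (s / c) 1))"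
      using False by (intro cinvertible_scaleC) auto
    then show "cinvertible (scaleR c a + scaleR s 1)"
      using False by (simp add: scaleC_of_real scaleR_add_right)
  qed
qed

lemma
  fixes h :: "'a::cstar_algebra"
  assumes sa: "adj h = h" and M: "norm h \<le> M"
  shows cge_norm_above: "cge (scaleR M 1) h"
    and cge_norm_below: "cge h (- scaleR M 1)"
proof -
  have "cinvertible (scaleR M 1 - h + scaleR s 1)" if "0 < s" for s
  proof -
    have "cinvertible (- (h - scaleC (complex_of_real (M + s)) 1))"
      using M norm_ge_zero[of h] that
      by (intro cinvertible_uminus cinvertible_sub_scaleC_one) (simp del: of_real_add)
    then show ?thesis
      by (simp add: scaleC_of_real scaleR_add_left algebra_simps del: of_real_add)
  qed
  then show "cge (scaleR M 1) h"
    using selfadjoint_cge_zero_iff[of "scaleR M 1 - h"] sa by (simp add: cge_iff_nonneg[of _ h])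
  have "cinvertible (h + scaleR M 1 + scaleR s 1)" if "0 < s" for s
  proof -
    have "cmod (complex_of_real (- (M + s))) = \<bar>- (M + s)\<bar>"
      by (rule norm_of_real)
    then have "cinvertible (h - scaleC (complex_of_real (- (M + s))) 1)"
      using M norm_ge_zero[of h] that by (intro cinvertible_sub_scaleC_one) simp
    then show ?thesis
      by (simp only: scaleC_of_real) (simp add: scaleR_diff_left algebra_simps)
  qed
  then show "cge h (- scaleR M 1)"
    using selfadjoint_cge_zero_iff[of "h + scaleR M 1"] sa by (simp add: cge_iff_nonneg[of h])
qed

lemma cinvertible_sub_scaleR_one_of_cge:
  fixes h :: "'a::cstar_algebra"
  assumes sa: "adj h = h" and nonneg: "cge h 0" and above: "cge (scaleR M 1) h"
    and r: "M < \<bar>r\<bar>" "0 \<le> M"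
  shows "cinvertible (h - scaleR r 1)"
proof (cases "0 < r")
  case True
  have "\<forall>s>0. cinvertible (scaleR M 1 - h + scaleR s 1)"
    using above selfadjoint_cge_zero_iff[of "scaleR M 1 - h"] sa
    by (simp add: cge_iff_nonneg[of _ h])
  then have "cinvertible (scaleR M 1 - h + scaleR (r - M) 1)"
    using True r by simp
  then have "cinvertible (- (scaleR M 1 - h + scaleR (r - M) 1))"
    by (rule cinvertible_uminus)
  then show ?thesis by (simp add: scaleR_diff_left)
next
  case False
  then have "0 < - r" using r by linarith
  then have "cinvertible (h + scaleR (- r) 1)"
    using nonneg unfolding selfadjoint_cge_zero_iff[OF sa] by blast
  then show ?thesis by simp
qed

lemma norm_le_of_cge:
  fixes h :: "'a::cstar_algebra"
  assumes sa: "adj h = h" and nonneg: "cge h 0" and above: "cge (scaleR M 1) h" and M: "0 \<le> M"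
  shows "norm h \<le> M"
proof (rule dense_ge)
  fix \<rho> assume "M < \<rho>"
  show "norm h \<le> \<rho>"
  proof (rule selfadjoint_norm_le[OF sa])
    show "0 < \<rho>" using \<open>M < \<rho>\<close> M by simp
    fix z :: complex assume z: "\<rho> \<le> cmod z"
    show "cinvertible (h - scaleC z 1)"
    proof (cases "Im z = 0")
      case True
      then have "z = complex_of_real (Re z)" by (simp add: complex_eq_iff)
      then have "scaleC z 1 = scaleR (Re z) (1::'a)" by (metis scaleC_of_real)
      moreover have "M < \<bar>Re z\<bar>" using z True \<open>M < \<rho>\<close> by (simp add: cmod_eq_Re)
      ultimately show ?thesis
        using cinvertible_sub_scaleR_one_of_cge[OF sa nonneg above _ M] by simp
    qed (rule selfadjoint_cinvertible_sub_nonreal[OF sa])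
  qed
qed

lemma selfadjoint_cge_zero_iff_norm:
  fixes h :: "'a::cstar_algebra"
  assumes sa: "adj h = h" and t: "norm h \<le> t"
  shows "cge h 0 \<longleftrightarrow> norm (scaleR t 1 - h) \<le> t"
proof
  assume "cge h 0"
  then show "norm (scaleR t 1 - h) \<le> t"
    using cge_norm_above[OF sa t] order_trans[OF norm_ge_zero t]
    by (intro norm_le_of_cge)
      (simp_all add: sa cge_iff_nonneg[of _ h] cge_iff_nonneg[of "scaleR t 1" "scaleR t 1 - h"])
next
  assume close: "norm (scaleR t 1 - h) \<le> t"
  have "cge (scaleR t 1) (scaleR t 1 - h)"
    using close by (intro cge_norm_above) (simp add: sa)
  then show "cge h 0"
    by (simp add: cge_iff_nonneg[of "scaleR t 1"])
qed

lemma cge_add: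
  fixes a b :: "'a::cstar_algebra"
  assumes "adj a = a" "adj b = b" "cge a 0" "cge b 0"
  shows "cge (a + b) 0"
proof -
  have "norm (scaleR (norm a + norm b) 1 - (a + b))
      \<le> norm (scaleR (norm a) 1 - a) + norm (scaleR (norm b) 1 - b)"
    using norm_triangle_ineq[of "scaleR (norm a) 1 - a" "scaleR (norm b) 1 - b"]
    by (simp add: scaleR_add_left algebra_simps)
  also have "\<dots> \<le> norm a + norm b"
    using assms selfadjoint_cge_zero_iff_norm[of a "norm a"]
      selfadjoint_cge_zero_iff_norm[of b "norm b"]
    by (simp add: add_mono)
  finally show ?thesis
    using assms norm_triangle_ineq[of a b] by (subst selfadjoint_cge_zero_iff_norm) auto
qed

lemma cge_scaleR_one_of_less:
  fixes a :: "'a::cstar_algebra"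
  assumes sa: "adj a = a" and c: "0 < c" and below: "\<And>c'. 0 < c' \<Longrightarrow> c' < c \<Longrightarrow> cge a (scaleR c' 1)"
  shows "cge a (scaleR c 1)"
proof -
  have "cinvertible (a - scaleR c 1 + scaleR s 1)" if "0 < s" for s
  proof -
    define c' where "c' = c - min s c / 2"
    have "0 < c'" "c' < c" "c - c' < s" using c that unfolding c'_def by auto
    then have "cinvertible (a - scaleR c' 1 + scaleR (s - (c - c')) 1)"
      using below[of c'] sa selfadjoint_cge_zero_iff[of "a - scaleR c' 1"]
      by (simp add: cge_iff_nonneg[of a])
    then show ?thesis by (simp add: algebra_simps)
  qed
  then show ?thesis
    using selfadjoint_cge_zero_iff[of "a - scaleR c 1"] sa by (simp add: cge_iff_nonneg[of a])
qed

lemma cge_one_div_norm_cinv: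
  fixes a :: "'a::cstar_algebra"
  assumes sa: "adj a = a" and nonneg: "cge a 0" and inv: "cinvertible a"
  shows "cge a (scaleR (1 / norm (cinv a)) 1)"
proof -
  define N where "N = norm (cinv a)"
  have N: "0 < N" unfolding N_def using cinv_neq_zero[OF inv] by simp
  have "cinvertible (a - scaleR l 1)" if "l < 1 / N" for l
  proof (cases "0 < l")
    case True
    have "norm (scaleR l (cinv a)) = l * N" using True unfolding N_def by simp
    also have "\<dots> < 1" using that N by (simp add: field_simps)
    finally have "cinvertible (a * (1 - scaleR l (cinv a)))"
      by (intro cinvertible_mult inv cinvertible_one_minus)
    then show ?thesis by (simp add: right_diff_distrib cinv_right[OF inv])
  next
    case False
    then show ?thesis
    proof (cases "l = 0")
      case False
      then have "cinvertible (a + scaleR (- l) 1)"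
        using \<open>\<not> 0 < l\<close> nonneg[unfolded selfadjoint_cge_zero_iff[OF sa], rule_format, of "- l"]
        by simp
      then show ?thesis by simp
    qed (simp add: inv)
  qed
  moreover have "a - scaleR (1 / N) 1 + scaleR s 1 = a - scaleR (1 / N - s) 1" for s
    by (simp add: scaleR_diff_left)
  ultimately have "cinvertible (a - scaleR (1 / N) 1 + scaleR s 1)" if "0 < s" for s
    using that by (metis diff_less_eq less_add_same_cancel1)
  then show ?thesis
    using selfadjoint_cge_zero_iff[of "a - scaleR (1 / N) 1"] sa
    unfolding N_def by (simp add: cge_iff_nonneg[of a])
qed

section \<open>Accretive elements\<close>

lemma norm_one_minus_scaleR_le:
  fixes H :: "'a::cstar_algebra"
  assumes sa: "adj H = H" and lower: "cge H (scaleR e 1)"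
    and t: "0 \<le> t" "t * norm H \<le> 1" "t * e \<le> 1"
  shows "norm (1 - scaleR t H) \<le> 1 - t * e"
proof (rule norm_le_of_cge)
  have "cge (scaleR (1 - t * norm H) 1 + scaleR t (scaleR (norm H) 1 - H)) 0"
    using cge_norm_above[OF sa order_refl] t sa
    by (intro cge_add cge_scaleR cge_scaleR_one)
      (simp_all add: cge_iff_nonneg[of "scaleR (norm H) 1"])
  then show "cge (1 - scaleR t H) 0"
    by (simp add: algebra_simps scaleR_diff_left)
  have "cge (scaleR t (H - scaleR e 1)) 0"
    using lower sa t by (intro cge_scaleR) (simp_all add: cge_iff_nonneg[of H])
  moreover have "scaleR (1 - t * e) 1 - (1 - scaleR t H) = scaleR t (H - scaleR e 1)"
    by (simp add: algebra_simps scaleR_diff_left)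
  ultimately show "cge (scaleR (1 - t * e) 1) (1 - scaleR t H)"
    by (simp only: cge_iff_nonneg[of "scaleR (1 - t * e) 1"])
qed (use sa t in simp_all)

lemma norm_one_minus_scaleR_sq_le:
  fixes T :: "'a::cstar_algebra"
  shows "norm (1 - scaleR t T) ^ 2 \<le> norm (1 - scaleR (2 * t) (cRe T)) + t ^ 2 * norm T ^ 2"
proof -
  define D where "D = 1 - scaleR t T"
  have "adj D * D = 1 - scaleR t T - scaleR t (adj T) + scaleR (t * t) (adj T * T)"
    unfolding D_def by (simp add: algebra_simps)
  also have "\<dots> = (1 - scaleR (2 * t) (cRe T)) + scaleR (t ^ 2) (adj T * T)"
    by (simp add: cRe_def algebra_simps power2_eq_square scaleR_add_right)
  finally have DD: "adj D * D = (1 - scaleR (2 * t) (cRe T)) + scaleR (t ^ 2) (adj T * T)" .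
  have "norm D ^ 2 = norm (adj D * D)"
    by (simp add: cstar_identity power2_eq_square)
  also have "\<dots> \<le> norm (1 - scaleR (2 * t) (cRe T)) + t ^ 2 * norm T ^ 2"
    using norm_triangle_ineq[of "1 - scaleR (2 * t) (cRe T)" "scaleR (t ^ 2) (adj T * T)"]
    unfolding DD by (simp add: cstar_identity power2_eq_square)
  finally show ?thesis unfolding D_def .
qed

text \<open>\<open>\<parallel>1 - \<tau> T\<parallel>\<^sup>2 \<le> 1 - 2 \<tau> e + \<tau>\<^sup>2 \<parallel>T\<parallel>\<^sup>2\<close>, which is below \<open>(1 - \<tau> e')\<^sup>2\<close> for small \<open>\<tau>\<close>.\<close>
lemma accretive_contraction:
  fixes T :: "'a::cstar_algebra"
  assumes lower: "cge (cRe T) (scaleR e 1)" and e': "0 < e'" "e' < e"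
  shows "\<exists>\<tau>>0. \<tau> * e' < 1 \<and> norm (1 - scaleR \<tau> T) \<le> 1 - \<tau> * e'"
proof -
  define K where "K = norm (cRe T)"
  define C where "C = norm T ^ 2"
  have K: "0 \<le> K" and C: "0 \<le> C" and e: "0 < e" unfolding K_def C_def using e' by auto
  define \<tau> where "\<tau> = min (min (1 / (2 * (K + 1))) (1 / (2 * e))) ((e - e') / (C + 1))"
  have \<tau>: "0 < \<tau>" "\<tau> \<le> 1 / (2 * (K + 1))" "\<tau> \<le> 1 / (2 * e)" "\<tau> \<le> (e - e') / (C + 1)"
    unfolding \<tau>_def using K C e' by auto
  have "2 * \<tau> * K \<le> 1"
    using \<tau>(1,2) K by (simp add: field_simps)
  moreover have "2 * \<tau> * e \<le> 1" "\<tau> * C \<le> e - e'"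
    using \<tau>(1,3,4) e C by (simp_all add: field_simps)
  ultimately have "norm (1 - scaleR (2 * \<tau>) (cRe T)) \<le> 1 - 2 * \<tau> * e"
    using lower \<tau>(1) unfolding K_def by (intro norm_one_minus_scaleR_le) simp_all
  then have Re_part: "norm (1 - scaleR (2 * \<tau>) (cRe T)) \<le> 1 - 2 * (\<tau> * e)"
    by (simp add: mult.assoc)
  have T_part: "\<tau> ^ 2 * norm T ^ 2 \<le> \<tau> * e - \<tau> * e'"
    using mult_left_mono[OF \<open>\<tau> * C \<le> e - e'\<close>] \<tau>(1) unfolding C_def
    by (simp add: power2_eq_square right_diff_distrib mult.assoc)
  have "\<tau> * e' < \<tau> * e" using e' \<tau>(1) by simp
  then have small: "\<tau> * e' < 1" using \<open>2 * \<tau> * e \<le> 1\<close> by (simp add: mult.assoc)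
  have "norm (1 - scaleR \<tau> T) ^ 2 \<le> 1 - 2 * (\<tau> * e) + (\<tau> * e - \<tau> * e')"
    using norm_one_minus_scaleR_sq_le[of \<tau> T] Re_part T_part by linarith
  also have "\<dots> \<le> 1 - 2 * (\<tau> * e') + (\<tau> * e') ^ 2"
    using \<open>\<tau> * e' < \<tau> * e\<close> zero_le_power2[of "\<tau> * e'"] by linarith
  also have "\<dots> = (1 - \<tau> * e') ^ 2"
    by (simp add: power2_diff)
  finally have "norm (1 - scaleR \<tau> T) \<le> 1 - \<tau> * e'"
    by (rule power2_le_imp_le) (use small in simp)
  then show ?thesis using \<tau>(1) small by blast
qed

lemma
  fixes T :: "'a::cstar_algebra"
  assumes lower: "cge (cRe T) (scaleR e 1)" and e: "0 < e"
  shows cinvertible_accretive: "cinvertible T"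
    and norm_cinv_accretive_le: "norm (cinv T) \<le> 1 / e"
proof -
  have inv_le: "cinvertible T \<and> norm (cinv T) \<le> 1 / e'" if e': "0 < e'" "e' < e" for e'
  proof -
    obtain \<tau> where \<tau>: "0 < \<tau>" "\<tau> * e' < 1" and D: "norm (1 - scaleR \<tau> T) \<le> 1 - \<tau> * e'"
      using accretive_contraction[OF lower e'] by blast
    then have D1: "norm (1 - scaleR \<tau> T) < 1" using e' mult_pos_pos[OF \<tau>(1) e'(1)] by linarith
    then have inv: "cinvertible (scaleR \<tau> T)"
      using cinvertible_one_minus[OF D1] by simp
    have "norm (cinv (scaleR \<tau> T)) \<le> 1 / (1 - norm (1 - scaleR \<tau> T))"
      using norm_cinv_one_minus_le[OF D1] by simp
    also have "\<dots> \<le> 1 / (\<tau> * e')"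
      using D \<tau> e' D1 by (intro divide_left_mono) auto
    finally have "\<tau> * norm (cinv (scaleR \<tau> T)) \<le> 1 / e'"
      using \<tau> e' by (simp add: field_simps)
    then show ?thesis
      using cinvertible_of_cinvertible_scaleR[OF inv] \<tau> by simp
  qed
  then show "cinvertible T" using inv_le[of "e / 2"] e by simp
  show "norm (cinv T) \<le> 1 / e"
  proof (rule dense_ge)
    fix y assume "1 / e < y"
    moreover have "0 < 1 / e" using e by simp
    ultimately have "0 < y" by linarith
    then have "0 < 1 / y" "1 / y < e" using \<open>1 / e < y\<close> e by (simp_all add: field_simps)
    then show "norm (cinv T) \<le> y" using inv_le[of "1 / y"] by simp
  qed
qed

section \<open>Real part of the inverse\<close>

lemma cge_of_near:
  fixes Q Q' :: "'a::cstar_algebra"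
  assumes sa: "adj Q = Q" "adj Q' = Q'" and nonneg: "cge Q 0" and inv: "cinvertible Q"
    and K: "norm (cinv Q) \<le> K" and near: "norm (Q' - Q) \<le> 1 / K"
  shows "cge Q' 0"
proof -
  define N where "N = norm (cinv Q)"
  have N: "0 < N" "N \<le> K" unfolding N_def using cinv_neq_zero[OF inv] K by simp_all
  have "cge (Q - scaleR (1 / N) 1) 0"
    using cge_one_div_norm_cinv[OF sa(1) nonneg inv] unfolding N_def cge_iff_nonneg[of Q] .
  moreover have "cge (scaleR (1 / N - 1 / K) 1) (0::'a)"
    using N by (intro cge_scaleR_one) (simp add: frac_le)
  ultimately have "cge ((Q - scaleR (1 / N) 1) + scaleR (1 / N - 1 / K) 1) 0"
    using sa by (intro cge_add) simp_all
  moreover have "cge ((Q' - Q) + scaleR (1 / K) 1) 0"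
    using cge_norm_below[of "Q' - Q", OF _ near] sa by (simp add: cge_iff_nonneg[of "Q' - Q"])
  ultimately have
    "cge ((Q - scaleR (1 / N) 1) + scaleR (1 / N - 1 / K) 1 + ((Q' - Q) + scaleR (1 / K) 1)) 0"
    using sa by (intro cge_add[of "_ + _"]) simp_all
  then show ?thesis by (simp add: scaleR_diff_left)
qed

text \<open>The spectrum of \<open>Q t\<close> cannot cross \<open>0\<close> because the inverses stay bounded.\<close>
lemma cge_along_path:
  fixes Q :: "real \<Rightarrow> 'a::cstar_algebra"
  assumes sa: "\<And>t. 0 \<le> t \<Longrightarrow> t \<le> 1 \<Longrightarrow> adj (Q t) = Q t"
    and inv: "\<And>t. 0 \<le> t \<Longrightarrow> t \<le> 1 \<Longrightarrow> cinvertible (Q t)"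
    and bound: "\<And>t. 0 \<le> t \<Longrightarrow> t \<le> 1 \<Longrightarrow> norm (cinv (Q t)) \<le> K"
    and lipschitz: "\<And>s t. 0 \<le> s \<Longrightarrow> s \<le> 1 \<Longrightarrow> 0 \<le> t \<Longrightarrow> t \<le> 1 \<Longrightarrow>
      norm (Q t - Q s) \<le> L * \<bar>t - s\<bar>"
    and start: "cge (Q 0) 0"
  shows "cge (Q 1) 0"
proof -
  have "0 < norm (cinv (Q 0))" using cinv_neq_zero[OF inv[of 0]] by simp
  then have K: "0 < K" using bound[of 0] by linarith
  obtain n :: nat where n: "1 \<le> n" "L * K \<le> real n"
    using real_arch_simple[of "L * K"] by (metis le_max_iff_disj of_nat_max max.cobounded1)
  have "cge (Q (real k / real n)) 0" if "k \<le> n" for k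
    using that
  proof (induction k)
    case (Suc k)
    have k: "0 \<le> real k / real n" "real k / real n \<le> 1"
      "0 \<le> real (Suc k) / real n" "real (Suc k) / real n \<le> 1"
      using Suc.prems n by auto
    have "norm (Q (real (Suc k) / real n) - Q (real k / real n)) \<le> L * (1 / real n)"
      using lipschitz[OF k] n by (simp add: field_simps)
    also have "\<dots> \<le> 1 / K" using n K by (simp add: field_simps)
    finally have near: "norm (Q (real (Suc k) / real n) - Q (real k / real n)) \<le> 1 / K" .
    have "cge (Q (real k / real n)) 0" using Suc by simp
    then show ?case
      using cge_of_near[OF sa[OF k(1,2)] sa[OF k(3,4)] _ inv[OF k(1,2)] bound[OF k(1,2)] near]
      by simp
  qed (simp add: start)
  from this[of n] show ?thesis using n by simp
qed

lemma norm_congruence_diff_le: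
  fixes B B' X :: "'a::cstar_algebra"
  shows "norm (adj B * X * B - adj B' * X * B') \<le> norm X * (norm B + norm B') * norm (B - B')"
proof -
  have "adj B * X * B - adj B' * X * B' = adj (B - B') * X * B + adj B' * X * (B - B')"
    by (simp add: algebra_simps)
  then have "norm (adj B * X * B - adj B' * X * B')
      \<le> norm (adj (B - B') * X * B) + norm (adj B' * X * (B - B'))"
    by (simp only: norm_triangle_ineq)
  also have "\<dots> \<le> norm (B - B') * norm X * norm B + norm B' * norm X * norm (B - B')"
    using norm_mult_le3[of "adj (B - B')" X B] norm_mult_le3[of "adj B'" X "B - B'"]
    by (simp del: adj_diff)
  finally show ?thesis by (simp add: algebra_simps)
qed

lemma
  fixes A X :: "'a::cstar_algebra"
  assumes "cinvertible A" "cinvertible X"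
  shows cinvertible_congruence_cinv: "cinvertible (adj (cinv A) * X * cinv A)"
    and cinv_congruence_cinv: "cinv (adj (cinv A) * X * cinv A) = A * cinv X * adj A"
proof -
  have inv: "cinvertible (adj (cinv A))" "cinvertible (cinv A)"
    using assms by (simp_all add: cinvertible_adj cinvertible_cinv)
  then have inv2: "cinvertible (adj (cinv A) * X)"
    using assms by (simp add: cinvertible_mult)
  then show "cinvertible (adj (cinv A) * X * cinv A)"
    using inv by (simp add: cinvertible_mult)
  have "cinv (adj (cinv A) * X * cinv A) = cinv (cinv A) * (cinv X * cinv (adj (cinv A)))"
    using inv inv2 assms by (simp only: cinv_mult)
  also have "\<dots> = A * cinv X * adj A"
    using inv assms by (simp add: cinv_cinv cinv_adj mult.assoc cinvertible_cinv)
  finally show "cinv (adj (cinv A) * X * cinv A) = A * cinv X * adj A" .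
qed

lemma cge_cRe_segment:
  fixes A :: "'a::cstar_algebra"
  assumes A: "cge (cRe A) (scaleR \<delta> 1)" and t: "0 \<le> t" "t \<le> 1"
  shows "cge (cRe (scaleR (1 - t) 1 + scaleR t A)) (scaleR (min 1 \<delta>) 1)"
proof -
  define \<mu> where "\<mu> = min 1 \<delta>"
  have "cge (scaleR ((1 - t) * (1 - \<mu>) + t * (\<delta> - \<mu>)) 1 + scaleR t (cRe A - scaleR \<delta> 1)) 0"
    using A t by (intro cge_add cge_scaleR_one cge_scaleR)
      (simp_all add: \<mu>_def cge_iff_nonneg[of "cRe A"])
  moreover have "cRe (scaleR (1 - t) 1 + scaleR t A) = scaleR (1 - t) 1 + scaleR t (cRe A)"
    by (simp only: cRe_add cRe_scaleR cRe_one)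
  then have "scaleR ((1 - t) * (1 - \<mu>) + t * (\<delta> - \<mu>)) 1 + scaleR t (cRe A - scaleR \<delta> 1)
      = cRe (scaleR (1 - t) 1 + scaleR t A) - scaleR \<mu> 1"
    by (simp add: algebra_simps scaleR_diff_left scaleR_diff_right)
  ultimately show ?thesis
    unfolding \<mu>_def[symmetric] by (simp add: cge_iff_nonneg[of "cRe _"])
qed

lemma
  fixes A :: "'a::cstar_algebra"
  assumes A: "cge (cRe A) (scaleR \<delta> 1)" "0 < \<delta>" and t: "0 \<le> t" "t \<le> 1"
  shows cinvertible_segment: "cinvertible (scaleR (1 - t) 1 + scaleR t A)"
    and norm_cinv_segment_le: "norm (cinv (scaleR (1 - t) 1 + scaleR t A)) \<le> 1 / min 1 \<delta>"
  using cge_cRe_segment[OF A(1) t] A(2)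
  by (simp_all add: cinvertible_accretive norm_cinv_accretive_le)

lemma norm_cinv_segment_diff_le:
  fixes A :: "'a::cstar_algebra"
  assumes A: "cge (cRe A) (scaleR \<delta> 1)" "0 < \<delta>"
    and s: "0 \<le> s" "s \<le> 1" and t: "0 \<le> t" "t \<le> 1"
  shows "norm (cinv (scaleR (1 - t) 1 + scaleR t A) - cinv (scaleR (1 - s) 1 + scaleR s A))
    \<le> \<bar>t - s\<bar> * norm (A - 1) / (min 1 \<delta>)\<^sup>2"
proof -
  let ?At = "\<lambda>t. scaleR (1 - t) 1 + scaleR t A"
  have "?At s - ?At t = scaleR (s - t) (A - 1)"
    by (simp add: algebra_simps scaleR_diff_left scaleR_diff_right)
  then have At_diff: "norm (?At s - ?At t) = \<bar>t - s\<bar> * norm (A - 1)"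
    by (simp add: abs_minus_commute)
  have "norm (cinv (?At t) - cinv (?At s))
      \<le> norm (cinv (?At t)) * norm (?At s - ?At t) * norm (cinv (?At s))"
    unfolding cinv_diff[OF cinvertible_segment[OF A s] cinvertible_segment[OF A t]]
    by (rule norm_mult_le3)
  also have "\<dots> \<le> (1 / min 1 \<delta>) * (\<bar>t - s\<bar> * norm (A - 1)) * (1 / min 1 \<delta>)"
    using norm_cinv_segment_le[OF A s] norm_cinv_segment_le[OF A t] A(2)
    unfolding At_diff by (intro mult_mono) simp_all
  finally show ?thesis by (simp add: power2_eq_square)
qed

text \<open>Deform \<open>A\<close> to \<open>1\<close> through the accretive elements \<open>(1 - t) + t A\<close>: the congruent
  elements stay selfadjoint and invertible with uniformly bounded inverses, so positivity passes
  from \<open>X\<close> at \<open>t = 0\<close> to \<open>t = 1\<close>.\<close>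
lemma cge_congruence_cinv_accretive:
  fixes A X :: "'a::cstar_algebra"
  assumes sa: "adj X = X" and X: "cge X (scaleR \<eta> 1)" "0 < \<eta>"
    and A: "cge (cRe A) (scaleR \<delta> 1)" "0 < \<delta>"
  shows "cge (adj (cinv A) * X * cinv A) 0"
proof -
  define \<mu> where "\<mu> = min 1 \<delta>"
  have \<mu>: "0 < \<mu>" using A by (simp add: \<mu>_def)
  define At where "At t = scaleR (1 - t) 1 + scaleR t A" for t
  note At_inv = cinvertible_segment[OF A, folded At_def]
    and norm_cinv_At = norm_cinv_segment_le[OF A, folded At_def \<mu>_def]
  have norm_At: "norm (At t) \<le> 1 + norm A" if "0 \<le> t" "t \<le> 1" for t
  proof -
    have "norm (At t) \<le> (1 - t) + t * norm A"
      unfolding At_def using norm_triangle_ineq[of "scaleR (1 - t) (1::'a)" "scaleR t A"] that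
      by simp
    also have "\<dots> \<le> 1 + norm A" using that mult_left_le_one_le[of "norm A" t] by simp
    finally show ?thesis .
  qed
  have X_inv: "cinvertible X" and norm_cinv_X: "norm (cinv X) \<le> 1 / \<eta>"
    using X by (simp_all add: cRe_selfadjoint[OF sa] cinvertible_accretive norm_cinv_accretive_le)
  define Q where "Q t = adj (cinv (At t)) * X * cinv (At t)" for t
  have "cge (Q 1) 0"
  proof (rule cge_along_path)
    fix t :: real assume t: "0 \<le> t" "t \<le> 1"
    show "adj (Q t) = Q t" unfolding Q_def by (simp add: sa mult.assoc)
    show "cinvertible (Q t)"
      unfolding Q_def by (rule cinvertible_congruence_cinv[OF At_inv[OF t] X_inv])
    have "norm (cinv (Q t)) = norm (At t * cinv X * adj (At t))"
      unfolding Q_def by (simp add: cinv_congruence_cinv[OF At_inv[OF t] X_inv])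
    also have "\<dots> \<le> norm (At t) * norm (cinv X) * norm (adj (At t))"
      by (rule norm_mult_le3)
    also have "\<dots> \<le> (1 + norm A) * (1 / \<eta>) * (1 + norm A)"
      using norm_At[OF t] norm_cinv_X X(2) by (intro mult_mono) (simp_all add: add_nonneg_nonneg)
    finally show "norm (cinv (Q t)) \<le> (1 + norm A) * (1 / \<eta>) * (1 + norm A)" .
  next
    fix s t :: real assume s: "0 \<le> s" "s \<le> 1" and t: "0 \<le> t" "t \<le> 1"
    have "norm (Q t - Q s) \<le> norm X * (norm (cinv (At t)) + norm (cinv (At s)))
        * norm (cinv (At t) - cinv (At s))"
      unfolding Q_def by (rule norm_congruence_diff_le)
    also have "\<dots> \<le> norm X * (2 / \<mu>) * (\<bar>t - s\<bar> * norm (A - 1) / \<mu>\<^sup>2)"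
      using norm_cinv_At[OF s] norm_cinv_At[OF t] \<mu>
        norm_cinv_segment_diff_le[OF A s t, folded At_def \<mu>_def]
      by (intro mult_mono) simp_all
    also have "\<dots> = (2 * norm X * norm (A - 1) / \<mu> ^ 3) * \<bar>t - s\<bar>"
      by (simp add: power3_eq_cube power2_eq_square ac_simps)
    finally show "norm (Q t - Q s) \<le> (2 * norm X * norm (A - 1) / \<mu> ^ 3) * \<bar>t - s\<bar>" .
  next
    have "cge (X - scaleR \<eta> 1 + scaleR \<eta> 1) 0"
      using X sa by (intro cge_add cge_scaleR_one) (simp_all add: cge_iff_nonneg[of X])
    then show "cge (Q 0) 0" unfolding Q_def At_def by simp
  qed
  then show ?thesis unfolding Q_def At_def by simp
qed

lemma congruence_cinv_cRe:
  fixes A :: "'a::cstar_algebra"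
  assumes inv: "cinvertible A"
  shows "adj (cinv A) * (cRe A - scaleR c (adj A * A)) * cinv A = cRe (cinv A) - scaleR c 1"
proof -
  define B where "B = cinv A"
  have AB: "A * B = 1"
    unfolding B_def using cinv_right[OF inv] .
  have adj_BA: "adj B * adj A = 1" using AB by (metis adj_mult adj_one)
  have "adj B * (adj A * A) * B = (adj B * adj A) * (A * B)" by (simp add: mult.assoc)
  then have "adj B * A * B = adj B" "adj B * adj A * B = B" "adj B * (adj A * A) * B = 1"
    using AB adj_BA by (simp_all add: mult.assoc)
  then have "adj B * (cRe A - scaleR c (adj A * A)) * B = scaleR (1/2) (adj B + B) - scaleR c 1"
    unfolding cRe_def by (simp add: algebra_simps)
  then show ?thesis unfolding B_def cRe_def by (simp add: add.commute)
qed

lemma cRe_cinv_ge: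
  fixes A :: "'a::cstar_algebra"
  assumes A: "cge (cRe A) (scaleR \<delta> 1)" "0 < \<delta>" and m: "norm A \<le> m"
  shows "cge (cRe (cinv A)) (scaleR (\<delta> / m\<^sup>2) 1)"
proof (rule cge_scaleR_one_of_less)
  have inv: "cinvertible A" by (rule cinvertible_accretive[OF A])
  then have "0 < m"
    using m cinvertible_neq_zero[OF inv] by (metis norm_le_zero_iff not_le order_trans)
  then show "0 < \<delta> / m\<^sup>2" using A by simp
  fix c assume c: "0 < c" "c < \<delta> / m\<^sup>2"
  define X where "X = cRe A - scaleR c (adj A * A)"
  have sa: "adj X = X" unfolding X_def by simp
  have "norm (adj A * A) \<le> m\<^sup>2"
    using m by (simp add: cstar_identity power2_eq_square mult_mono')
  then have "cge (scaleR (m\<^sup>2) 1) (adj A * A)" by (intro cge_norm_above) simp_all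
  then have "cge ((cRe A - scaleR \<delta> 1) + scaleR c (scaleR (m\<^sup>2) 1 - adj A * A)) 0"
    using A c by (intro cge_add cge_scaleR)
      (simp_all add: cge_iff_nonneg[of "cRe A"] cge_iff_nonneg[of "scaleR _ 1"])
  moreover have "(cRe A - scaleR \<delta> 1) + scaleR c (scaleR (m\<^sup>2) 1 - adj A * A)
      = X - scaleR (\<delta> - c * m\<^sup>2) 1"
    unfolding X_def by (simp add: algebra_simps scaleR_diff_left scaleR_diff_right)
  ultimately have "cge X (scaleR (\<delta> - c * m\<^sup>2) 1)" by (simp add: cge_iff_nonneg[of X])
  moreover have "0 < \<delta> - c * m\<^sup>2" using c \<open>0 < m\<close> by (simp add: field_simps)
  ultimately have "cge (adj (cinv A) * X * cinv A) 0"
    using sa A by (intro cge_congruence_cinv_accretive)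
  then show "cge (cRe (cinv A)) (scaleR c 1)"
    unfolding X_def congruence_cinv_cRe[OF inv] by (simp add: cge_iff_nonneg[of "cRe _"])
qed simp

section \<open>The map \<open>F\<^sub>V\<close>\<close>

lemma cge_cRe_of_cpos:
  fixes W :: "'a::cstar_algebra"
  assumes "W \<in> cpos"
  shows "cge (cRe W) 0"
proof -
  obtain e where e: "0 < e" "cge (cRe W) (scaleR e 1)" using assms unfolding cpos_def by blast
  then have "cge ((cRe W - scaleR e 1) + scaleR e 1) 0"
    by (intro cge_add cge_scaleR_one) (simp_all add: cge_iff_nonneg[of "cRe W" "scaleR e 1"])
  then show ?thesis by simp
qed

lemma scaleR_one_in_cpos: "0 < c \<Longrightarrow> scaleR c (1::'a::cstar_algebra) \<in> cpos"
  unfolding cpos_def using cge_scaleR_one[of 0]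
  by (auto simp: cRe_scaleR cge_iff_nonneg[of "scaleR c 1"])

lemma
  fixes V :: "'a::cstar_algebra"
  assumes "V \<in> cpos"
  shows norm_cinv_cRe_pos: "0 < norm (cinv (cRe V))"
    and cge_cRe_inverse_norm: "cge (cRe V) (scaleR (1 / norm (cinv (cRe V))) 1)"
proof -
  obtain e where "0 < e" "cge (cRe V) (scaleR e 1)" using assms unfolding cpos_def by blast
  then have inv: "cinvertible (cRe V)"
    by (intro cinvertible_accretive[of _ e]) (simp_all add: cRe_selfadjoint)
  then show "0 < norm (cinv (cRe V))" using cinv_neq_zero by simp
  show "cge (cRe V) (scaleR (1 / norm (cinv (cRe V))) 1)"
    using cge_one_div_norm_cinv[OF _ cge_cRe_of_cpos[OF assms] inv] by simp
qed

lemma cge_cRe_add_cpos: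
  fixes V W :: "'a::cstar_algebra"
  assumes "cge (cRe V) (scaleR c 1)" "W \<in> cpos"
  shows "cge (cRe (V + W)) (scaleR c 1)"
proof -
  have "cge ((cRe V - scaleR c 1) + cRe W) 0"
    using assms cge_cRe_of_cpos
    by (intro cge_add) (simp_all add: cge_iff_nonneg[of "cRe V" "scaleR c 1"])
  then show ?thesis
    unfolding cRe_add cge_iff_nonneg[of "cRe V + cRe W"] by (simp add: algebra_simps)
qed

lemma ball_subset_cpos:
  fixes X :: "'a::cstar_algebra"
  assumes "cge (cRe X) (scaleR c 1)"
  shows "ball X c \<subseteq> cpos"
proof
  fix Y assume "Y \<in> ball X c"
  then have d: "norm (Y - X) < c" by (simp add: dist_norm norm_minus_commute)
  have "cge (cRe (Y - X)) (- scaleR (norm (Y - X)) 1)"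
    using norm_cRe_le by (intro cge_norm_below) simp_all
  then have "cge ((cRe X - scaleR c 1) + (cRe (Y - X) + scaleR (norm (Y - X)) 1)) 0"
    using assms by (intro cge_add[of "cRe X - scaleR c 1"])
      (simp_all add: cge_iff_nonneg[of "cRe (Y - X)" "- _"] cge_iff_nonneg[of "cRe X" "scaleR c 1"])
  moreover have "(cRe X - scaleR c 1) + (cRe (Y - X) + scaleR (norm (Y - X)) 1)
      = cRe Y - scaleR (c - norm (Y - X)) 1"
    by (simp add: cRe_diff algebra_simps scaleR_diff_left)
  ultimately have "cge (cRe Y) (scaleR (c - norm (Y - X)) 1)"
    by (simp only: cge_iff_nonneg[of "cRe Y" "scaleR (c - norm (Y - X)) 1"])
  then show "Y \<in> cpos"
    unfolding cpos_def mem_Collect_eq using d by (intro exI[of _ "c - norm (Y - X)"] conjI) simp_all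
qed

lemma ball_subset_cpos_norm_less:
  fixes X :: "'a::cstar_algebra"
  assumes "cge (cRe X) (scaleR c 1)" and "norm X \<le> n"
  shows "ball X (min (b - n) c) \<subseteq> {W \<in> cpos. norm W < b}"
proof
  fix Y assume Y: "Y \<in> ball X (min (b - n) c)"
  then have "Y \<in> cpos" using ball_subset_cpos[OF assms(1)] by auto
  moreover have "norm Y < b"
    using Y assms(2) norm_triangle_ineq2[of Y X] by (simp add: dist_norm norm_minus_commute)
  ultimately show "Y \<in> {W \<in> cpos. norm W < b}" by simp
qed

lemma
  fixes V E :: "'a::cstar_algebra"
  assumes V: "V \<in> cpos" and E: "E \<in> cpos"
  shows cinvertible_add_cpos: "cinvertible (V + E)"
    and norm_cinv_add_cpos_le: "norm (cinv (V + E)) \<le> norm (cinv (cRe V))"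
    and cRe_cinv_add_cpos_ge: "norm (V + E) \<le> m \<Longrightarrow>
      cge (cRe (cinv (V + E))) (scaleR (1 / (m\<^sup>2 * norm (cinv (cRe V)))) 1)"
proof -
  have n: "0 < 1 / norm (cinv (cRe V))" using norm_cinv_cRe_pos[OF V] by simp
  have Re: "cge (cRe (V + E)) (scaleR (1 / norm (cinv (cRe V))) 1)"
    by (rule cge_cRe_add_cpos[OF cge_cRe_inverse_norm[OF V] E])
  show "cinvertible (V + E)" by (rule cinvertible_accretive[OF Re n])
  show "norm (cinv (V + E)) \<le> norm (cinv (cRe V))"
    using norm_cinv_accretive_le[OF Re n] by simp
  show "cge (cRe (cinv (V + E))) (scaleR (1 / (m\<^sup>2 * norm (cinv (cRe V)))) 1)"
    if "norm (V + E) \<le> m"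
    using cRe_cinv_ge[OF Re n that] by (simp add: mult.commute)
qed

lemma norm_add_le_add_Sup:
  fixes f :: "'a \<Rightarrow> 'b::real_normed_vector"
  assumes "\<exists>M. \<forall>y. P y \<longrightarrow> norm (f y) \<le> M" and "P x"
  shows "norm (v + f x) \<le> norm v + Sup {norm (f y) | y. P y}"
proof -
  have "norm (f x) \<le> Sup {norm (f y) | y. P y}"
    using assms by (intro cSup_upper) (auto simp: bdd_above_def)
  then show ?thesis using norm_triangle_ineq[of v "f x"] by linarith
qed

lemma cholomorphic_on_subset: "cholomorphic_on f U \<Longrightarrow> U' \<subseteq> U \<Longrightarrow> cholomorphic_on f U'"
  unfolding cholomorphic_on_def by blast

lemma cholomorphic_on_const_add:
  assumes "cholomorphic_on f U"
  shows "cholomorphic_on (\<lambda>x. c + f x) U"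
  unfolding cholomorphic_on_def
proof
  fix x assume "x \<in> U"
  then obtain L where L: "(f has_derivative L) (at x)" and "\<forall>c y. L (scaleC c y) = scaleC c (L y)"
    using assms unfolding cholomorphic_on_def by blast
  moreover have "((\<lambda>x. c + f x) has_derivative L) (at x)"
    using has_derivative_add[OF has_derivative_const L] by simp
  ultimately show "\<exists>L. ((\<lambda>x. c + f x) has_derivative L) (at x)
      \<and> (\<forall>c y. L (scaleC c y) = scaleC c (L y))"
    by blast
qed

lemma cholomorphic_on_cinv:
  fixes f :: "'a::cstar_algebra \<Rightarrow> 'a"
  assumes holo: "cholomorphic_on f U" and inv: "\<And>x. x \<in> U \<Longrightarrow> cinvertible (f x)"
  shows "cholomorphic_on (\<lambda>x. cinv (f x)) U"
  unfolding cholomorphic_on_def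
proof
  fix x assume "x \<in> U"
  then obtain L where L: "(f has_derivative L) (at x)"
    and linear: "\<And>c y. L (scaleC c y) = scaleC c (L y)"
    using holo unfolding cholomorphic_on_def by blast
  define B where "B = cinv (f x)"
  have "((\<lambda>x. cinv (f x)) has_derivative (\<lambda>h. - (B * L h * B))) (at x)"
    using diff_chain_at[OF L has_derivative_cinv[OF inv[OF \<open>x \<in> U\<close>]]]
    unfolding B_def by (simp add: o_def)
  moreover have "- (B * L (scaleC c y) * B) = scaleC c (- (B * L y * B))" for c y
    by (simp add: linear scaleC_minus_right flip: scaleC_mult_left scaleC_mult_right)
  ultimately show "\<exists>L. ((\<lambda>x. cinv (f x)) has_derivative L) (at x)
      \<and> (\<forall>c y. L (scaleC c y) = scaleC c (L y))"
    by blast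
qed

theorem mainTheorem3:
  fixes \<eta> :: "'a::cstar_algebra \<Rightarrow> 'a" and V :: 'a and b :: real
  assumes eta_maps: "\<forall>W\<in>cpos. \<eta> W \<in> cpos"
    and eta_holo: "cholomorphic_on \<eta> cpos"
    and eta_bdd: "\<forall>r>0. \<exists>M. \<forall>W\<in>cpos. norm W \<le> r \<longrightarrow> norm (\<eta> W) \<le> M"
    and V_pos: "V \<in> cpos"
    and b_gt: "b > norm (cinv (cRe V))"
  defines "R \<equiv> {W \<in> cpos. norm W < b}"
    and "F \<equiv> (\<lambda>W. cinv (V + \<eta> W))"
    and "m \<equiv> norm V + Sup {norm (\<eta> W') | W'. W' \<in> cpos \<and> norm W' \<le> b}"
  shows "(\<forall>W\<in>R. cinvertible (V + \<eta> W))
    \<and> (\<forall>W\<in>R. F W \<in> R)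
    \<and> cholomorphic_on F R
    \<and> (\<exists>M. \<forall>W\<in>R. norm (F W) \<le> M)
    \<and> (\<exists>\<epsilon>>0. \<forall>W\<in>R. ball (F W) \<epsilon> \<subseteq> R)
    \<and> (\<forall>W\<in>R. cge (cRe (F W)) (scaleR (1 / (m\<^sup>2 * norm (cinv (cRe V)))) 1))"
proof -
  define n where "n = norm (cinv (cRe V))"
  define c where "c = 1 / (m\<^sup>2 * n)"
  have n: "0 < n" unfolding n_def using V_pos by (rule norm_cinv_cRe_pos)
  then have "0 < b" using b_gt unfolding n_def by linarith
  have m_bound: "norm (V + \<eta> W) \<le> m" if "W \<in> cpos" "norm W \<le> b" for W
    unfolding m_def using eta_bdd \<open>0 < b\<close> that by (intro norm_add_le_add_Sup) blast+
  have inv: "cinvertible (V + \<eta> W)" and F_le: "norm (F W) \<le> n" if "W \<in> cpos" for W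
    using V_pos eta_maps that unfolding F_def n_def
    by (simp_all add: cinvertible_add_cpos norm_cinv_add_cpos_le)
  have ReF: "cge (cRe (F W)) (scaleR c 1)" if "W \<in> cpos" "norm W \<le> b" for W
    using cRe_cinv_add_cpos_ge[OF V_pos _ m_bound[OF that]] eta_maps that
    unfolding F_def c_def n_def by blast
  have "norm (scaleR b (1::'a)) \<le> b" using \<open>0 < b\<close> by simp
  then have "norm (V + \<eta> (scaleR b 1)) \<le> m"
    by (rule m_bound[OF scaleR_one_in_cpos[OF \<open>0 < b\<close>]])
  moreover have "0 < norm (V + \<eta> (scaleR b 1))"
    using inv[OF scaleR_one_in_cpos[OF \<open>0 < b\<close>]] cinvertible_neq_zero by simp
  ultimately have "0 < m" by linarith
  then have radius: "0 < min (b - n) c" using n b_gt unfolding c_def n_def by simp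
  have ball_R: "ball (F W) (min (b - n) c) \<subseteq> R" if "W \<in> R" for W
    using ball_subset_cpos_norm_less[OF ReF F_le] that unfolding R_def by auto
  have "cholomorphic_on (\<lambda>W. V + \<eta> W) R"
    by (rule cholomorphic_on_const_add[OF cholomorphic_on_subset[OF eta_holo]]) (auto simp: R_def)
  then have holo: "cholomorphic_on F R"
    unfolding F_def by (rule cholomorphic_on_cinv) (use inv in \<open>auto simp: R_def\<close>)
  show ?thesis
  proof (intro conjI holo)
    show "\<forall>W\<in>R. cinvertible (V + \<eta> W)" using inv unfolding R_def by blast
    show "\<forall>W\<in>R. F W \<in> R" using ball_R radius by (meson centre_in_ball subsetD)
    show "\<exists>M. \<forall>W\<in>R. norm (F W) \<le> M" using F_le unfolding R_def by blast
    show "\<exists>\<epsilon>>0. \<forall>W\<in>R. ball (F W) \<epsilon> \<subseteq> R" using ball_R radius by blast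
    show "\<forall>W\<in>R. cge (cRe (F W)) (scaleR (1 / (m\<^sup>2 * norm (cinv (cRe V)))) 1)"
      using ReF unfolding R_def c_def n_def by simp
  qed
qed

end
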